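(* Let $G=(V,E)\in\Theta$. If $|V|\ge 3$, then the minimum degree of $G$ is $4$; and if $|V|\ge 4$, then $\Gamma(G)$ contains two non-adjacent vertices.
   Context: Graphs are finite, undirected, possibly with parallel edges. Let $Z_3$ be the graph with two vertices and three parallel edges between them. For a graph $G$ and an edge $e$ with ends $u_1,u_2$, $G(e)$ is obtained from $G-e$ by adding a new vertex $w$, two parallel edges joining $w$ and $u_1$, and two parallel edges joining $w$ and $u_2$. $\Theta$ is the smallest set of graphs containing $Z_3$ and containing $G(e)$ for every $G\in\Theta$ and every $e\in E(G)$. For a vertex $x$, $d(x)$ is its degree and $N(x)=\{u: xu\in E(G)\}$; $\Gamma(G)$ is the set of vertices $x$ with $d(x)=4$ and $|N(x)|=2$. *)

theory Defs
  imports Main "HOL-Library.Multiset"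
begin

text \<open>Loopless multigraphs: a vertex set and a multiset of edges, each edge being a
  2-element set of vertices. Vertices are natural numbers (so fresh vertices exist).\<close>

type_synonym mgraph = "nat set \<times> nat set multiset"

definition verts :: "mgraph \<Rightarrow> nat set" where "verts G = fst G"
definition edges :: "mgraph \<Rightarrow> nat set multiset" where "edges G = snd G"

definition deg :: "mgraph \<Rightarrow> nat \<Rightarrow> nat" where
  "deg G x = size (filter_mset (\<lambda>e. x \<in> e) (edges G))"

definition nbrs :: "mgraph \<Rightarrow> nat \<Rightarrow> nat set" where
  "nbrs G x = {u. {x, u} \<in># edges G}"

definition Z3 :: mgraph where
  "Z3 = ({0, 1}, {# {0,1::nat}, {0,1}, {0,1} #})"

definition subdiv :: "mgraph \<Rightarrow> nat \<Rightarrow> nat \<Rightarrow> nat \<Rightarrow> mgraph" where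
  "subdiv G u1 u2 w = (insert w (verts G),
     edges G - {#{u1, u2}#} + {#{w, u1}, {w, u1}, {w, u2}, {w, u2}#})"

inductive_set Theta :: "mgraph set" where
  Z3: "Z3 \<in> Theta"
| step: "\<lbrakk> G \<in> Theta; {u1, u2} \<in># edges G; u1 \<noteq> u2; w \<notin> verts G \<rbrakk>
          \<Longrightarrow> subdiv G u1 u2 w \<in> Theta"

definition Gamma :: "mgraph \<Rightarrow> nat set" where
  "Gamma G = {x \<in> verts G. deg G x = 4 \<and> card (nbrs G x) = 2}"

end

theory Submission
  imports Defs
begin

text \<open>Subdividing an edge \<open>u\<^sub>1u\<^sub>2\<close> by a new
  vertex \<open>w\<close> gives \<open>w\<close> degree 4 and neighbourhood \<open>{u\<^sub>1, u\<^sub>2}\<close>, raises the degrees of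
  \<open>u\<^sub>1, u\<^sub>2\<close> by one and changes nothing elsewhere. All degrees are at least 3, so once a
  vertex other than \<open>w, u\<^sub>1, u\<^sub>2\<close> exists every degree is at least 4, with \<open>w\<close> attaining 4.
  For \<open>\<Gamma>\<close>: the three vertices of the subdivided \<open>Z\<^sub>3\<close> all lie in \<open>\<Gamma>\<close>; afterwards, of a
  non-adjacent pair in \<open>\<Gamma>(G)\<close> one vertex \<open>r\<close> avoids the adjacent pair \<open>u\<^sub>1, u\<^sub>2\<close>,
  and \<open>r\<close> together with \<open>w\<close> is a non-adjacent pair in \<open>\<Gamma>(G(e))\<close>.\<close>

definition wf_mgraph :: "mgraph \<Rightarrow> bool" where
  "wf_mgraph G \<longleftrightarrow> finite (verts G) \<and> (\<forall>e\<in>#edges G. e \<subseteq> verts G)"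

lemma verts_subdiv [simp]: "verts (subdiv G u1 u2 w) = insert w (verts G)"
  by (simp add: subdiv_def verts_def)

lemma edges_subdiv:
  "edges (subdiv G u1 u2 w) = edges G - {#{u1, u2}#} + {#{w, u1}, {w, u1}, {w, u2}, {w, u2}#}"
  by (simp add: subdiv_def edges_def)

lemma Gamma_subset_verts: "Gamma G \<subseteq> verts G"
  by (auto simp: Gamma_def)

locale subdiv_step =
  fixes G :: mgraph and u1 u2 w :: nat
  assumes wf: "wf_mgraph G" and edge: "{u1, u2} \<in># edges G" and distinct: "u1 \<noteq> u2"
    and fresh: "w \<notin> verts G"
begin

abbreviation H :: mgraph where "H \<equiv> subdiv G u1 u2 w"

lemma ends_in_verts: "u1 \<in> verts G" "u2 \<in> verts G"
  using wf edge by (auto simp: wf_mgraph_def)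

lemma fresh_ne_ends: "w \<noteq> u1" "w \<noteq> u2"
  using ends_in_verts fresh by auto

lemma fresh_notin_edge: "e \<in># edges G \<Longrightarrow> w \<notin> e"
  using wf fresh by (auto simp: wf_mgraph_def)

lemma wf_mgraph_subdiv: "wf_mgraph H"
  using wf ends_in_verts unfolding wf_mgraph_def edges_subdiv by (auto dest: in_diffD)

lemma card_verts_subdiv: "card (verts H) = card (verts G) + 1"
  using wf fresh by (simp add: wf_mgraph_def)

lemma deg_subdiv_other: "x \<notin> {u1, u2, w} \<Longrightarrow> deg H x = deg G x"
  unfolding deg_def edges_subdiv filter_union_mset filter_diff_mset by auto

lemma deg_subdiv_new: "deg H w = 4"
proof -
  have "filter_mset (\<lambda>e. w \<in> e) (edges G) = {#}"
    using fresh_notin_edge by (auto simp: filter_mset_eq_conv)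
  then show ?thesis
    unfolding deg_def edges_subdiv filter_union_mset filter_diff_mset
    using fresh_ne_ends by simp
qed

lemma deg_subdiv_end:
  assumes "u \<in> {u1, u2}"
  shows "deg H u = deg G u + 1"
proof -
  let ?at_u = "filter_mset (\<lambda>e. u \<in> e)"
  have removed: "?at_u {#{u1, u2}#} \<subseteq># ?at_u (edges G)"
    using edge assms by auto
  have "size (?at_u {#{u1, u2}#}) = 1"
    using assms by auto
  moreover have "size (?at_u {#{w, u1}, {w, u1}, {w, u2}, {w, u2}#}) = 2"
    using assms distinct fresh_ne_ends by auto
  moreover have "deg G u \<ge> 1"
    unfolding deg_def by (metis calculation(1) removed size_mset_mono)
  ultimately show ?thesis
    unfolding deg_def edges_subdiv filter_union_mset filter_diff_mset size_union
      size_Diff_submset[OF removed] by (simp add: deg_def)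
qed

lemma nbrs_subdiv_other: "x \<notin> {u1, u2, w} \<Longrightarrow> nbrs H x = nbrs G x"
  unfolding nbrs_def edges_subdiv by (auto simp: in_diff_count doubleton_eq_iff)

lemma nbrs_subdiv_new: "nbrs H w = {u1, u2}"
  unfolding nbrs_def edges_subdiv using fresh_notin_edge
  by (auto simp: in_diff_count doubleton_eq_iff count_eq_zero_iff)

text \<open>With a parallel copy of \<open>u\<^sub>1u\<^sub>2\<close> left over, \<open>u\<^sub>1\<close> and \<open>u\<^sub>2\<close> stay adjacent.\<close>

lemma nbrs_subdiv_end:
  assumes "count (edges G) {u1, u2} \<ge> 2" "u \<in> {u1, u2}"
  shows "nbrs H u = insert w (nbrs G u)"
proof -
  have old: "{u, v} \<in># edges G - {#{u1, u2}#} \<longleftrightarrow> {u, v} \<in># edges G" for v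
    using assms(1) edge by (cases "{u, v} = {u1, u2}") (auto simp: in_diff_count)
  have new: "{u, v} \<in># {#{w, u1}, {w, u1}, {w, u2}, {w, u2}#} \<longleftrightarrow> v = w" for v
    using assms(2) fresh_ne_ends distinct by (auto simp: doubleton_eq_iff)
  show ?thesis
    unfolding nbrs_def edges_subdiv using old new by auto
qed

lemma Gamma_subdiv_other: "x \<notin> {u1, u2, w} \<Longrightarrow> x \<in> Gamma H \<longleftrightarrow> x \<in> Gamma G"
  using deg_subdiv_other nbrs_subdiv_other by (simp add: Gamma_def)

lemma new_in_Gamma_subdiv: "w \<in> Gamma H"
  using deg_subdiv_new nbrs_subdiv_new distinct by (simp add: Gamma_def)

lemma nonadjacent_Gamma_pair_subdiv:
  assumes "r \<in> Gamma G" "r \<notin> {u1, u2}"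
  shows "\<exists>x\<in>Gamma H. \<exists>y\<in>Gamma H. x \<noteq> y \<and> y \<notin> nbrs H x"
proof -
  have "r \<noteq> w"
    using assms(1) Gamma_subset_verts[of G] fresh by auto
  then have "r \<in> Gamma H"
    using assms Gamma_subdiv_other by auto
  moreover have "r \<notin> nbrs H w"
    using nbrs_subdiv_new assms(2) by auto
  ultimately show ?thesis
    using new_in_Gamma_subdiv \<open>r \<noteq> w\<close> by metis
qed

end

lemma wf_mgraph_Theta: "G \<in> Theta \<Longrightarrow> wf_mgraph G"
proof (induction rule: Theta.induct)
  case Z3
  then show ?case by (auto simp: wf_mgraph_def Z3_def verts_def edges_def)
next
  case (step G u1 u2 w)
  then interpret subdiv_step G u1 u2 w by unfold_locales
  show ?case by (rule wf_mgraph_subdiv)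
qed

lemma subdiv_step_Theta:
  "\<lbrakk>G \<in> Theta; {u1, u2} \<in># edges G; u1 \<noteq> u2; w \<notin> verts G\<rbrakk> \<Longrightarrow> subdiv_step G u1 u2 w"
  using wf_mgraph_Theta by unfold_locales auto

lemma card_verts_Theta: "G \<in> Theta \<Longrightarrow> card (verts G) \<ge> 2 \<and> (card (verts G) = 2 \<longrightarrow> G = Z3)"
proof (induction rule: Theta.induct)
  case Z3
  then show ?case by (auto simp: Z3_def verts_def)
next
  case (step G u1 u2 w)
  interpret subdiv_step G u1 u2 w by (rule subdiv_step_Theta[OF step.hyps])
  show ?case using step.IH card_verts_subdiv by simp
qed

lemma deg_Z3: "x \<in> verts Z3 \<Longrightarrow> deg Z3 x = 3"
  by (auto simp: Z3_def deg_def edges_def verts_def)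

lemma nbrs_Z3: "x \<in> verts Z3 \<Longrightarrow> nbrs Z3 x = verts Z3 - {x}"
  by (auto simp: nbrs_def Z3_def edges_def verts_def doubleton_eq_iff)

lemma deg_Theta_ge_3: "G \<in> Theta \<Longrightarrow> x \<in> verts G \<Longrightarrow> deg G x \<ge> 3"
proof (induction arbitrary: x rule: Theta.induct)
  case Z3
  then show ?case by (simp add: deg_Z3)
next
  case (step G u1 u2 w)
  interpret subdiv_step G u1 u2 w by (rule subdiv_step_Theta[OF step.hyps])
  consider "x = w" | "x \<in> {u1, u2}" | "x \<notin> {u1, u2, w}"
    by blast
  then show ?case
  proof cases
    case 1
    then show ?thesis using deg_subdiv_new by simp
  next
    case 2
    then show ?thesis using deg_subdiv_end step.IH ends_in_verts by fastforce
  next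
    case 3
    then show ?thesis using deg_subdiv_other step.IH step.prems by simp
  qed
qed

lemma deg_Theta_ge_4:
  "G \<in> Theta \<Longrightarrow> card (verts G) \<ge> 3 \<Longrightarrow> x \<in> verts G \<Longrightarrow> deg G x \<ge> 4"
proof (induction arbitrary: x rule: Theta.induct)
  case Z3
  then show ?case by (simp add: Z3_def verts_def)
next
  case (step G u1 u2 w)
  interpret subdiv_step G u1 u2 w by (rule subdiv_step_Theta[OF step.hyps])
  consider "x = w" | "x \<in> {u1, u2}" | "x \<notin> {u1, u2, w}"
    by blast
  then show ?case
  proof cases
    case 1
    then show ?thesis using deg_subdiv_new by simp
  next
    case 2
    then show ?thesis
      using deg_subdiv_end deg_Theta_ge_3[OF step.hyps(1)] ends_in_verts by fastforce
  next
    case 3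
    with step.prems have x: "x \<in> verts G" by simp
    have "{x, u1, u2} \<subseteq> verts G" "finite (verts G)"
      using x ends_in_verts wf by (auto simp: wf_mgraph_def)
    then have "card (verts G) \<ge> 3"
      using 3 distinct by (metis card_3_iff card_mono insertCI)
    then show ?thesis
      using step.IH x 3 deg_subdiv_other by simp
  qed
qed

lemma Min_deg_Theta:
  assumes "G \<in> Theta" "card (verts G) \<ge> 3"
  shows "Min (deg G ` verts G) = 4"
  using assms(1)
proof cases
  case Z3
  with assms(2) show ?thesis by (simp add: Z3_def verts_def)
next
  case (step G' u1 u2 w)
  interpret subdiv_step G' u1 u2 w by (rule subdiv_step_Theta[OF step(2-)])
  have "finite (verts G)"
    using wf_mgraph_subdiv step(1) by (simp add: wf_mgraph_def)
  then show ?thesis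
    using deg_Theta_ge_4[OF assms] deg_subdiv_new step(1) by (intro Min_eqI) auto
qed

lemma Gamma_Theta_card_3: "G \<in> Theta \<Longrightarrow> card (verts G) = 3 \<Longrightarrow> Gamma G = verts G"
proof (induction rule: Theta.induct)
  case Z3
  then show ?case by (simp add: Z3_def verts_def)
next
  case (step G u1 u2 w)
  interpret subdiv_step G u1 u2 w by (rule subdiv_step_Theta[OF step.hyps])
  have "card (verts G) = 2"
    using step.prems card_verts_subdiv by simp
  then have G: "G = Z3"
    using card_verts_Theta[OF step.hyps(1)] by simp
  then have verts_G: "verts G = {0, 1}"
    by (simp add: Z3_def verts_def)
  then have ends: "{u1, u2} = {0, 1}"
    using ends_in_verts distinct by auto
  have "x \<in> Gamma H" if x: "x \<in> {u1, u2}" for x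
  proof -
    have x_G: "x \<in> verts G"
      using x ends_in_verts by auto
    have "deg H x = 4"
      using deg_subdiv_end[OF x] deg_Z3 x_G unfolding G by simp
    have "count (edges G) {u1, u2} \<ge> 2"
      unfolding G ends by (simp add: Z3_def edges_def)
    then have "nbrs H x = insert w (nbrs G x)"
      using nbrs_subdiv_end x by blast
    also have "\<dots> = insert w (verts G - {x})"
      using nbrs_Z3 x_G unfolding G by simp
    finally have "card (nbrs H x) = 2"
      using x_G fresh verts_G by (auto simp: card_insert_if)
    with \<open>deg H x = 4\<close> show ?thesis
      using x_G by (simp add: Gamma_def)
  qed
  moreover have "verts H = insert w {u1, u2}"
    by (simp only: verts_subdiv verts_G ends)
  ultimately have "verts H \<subseteq> Gamma H"
    using new_in_Gamma_subdiv by simp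
  then show ?case
    using Gamma_subset_verts[of H] by (rule subset_antisym[rotated])
qed

lemma nonadjacent_Gamma_pair_Theta:
  "G \<in> Theta \<Longrightarrow> card (verts G) \<ge> 4 \<Longrightarrow> \<exists>x\<in>Gamma G. \<exists>y\<in>Gamma G. x \<noteq> y \<and> y \<notin> nbrs G x"
proof (induction rule: Theta.induct)
  case Z3
  then show ?case by (simp add: Z3_def verts_def)
next
  case (step G u1 u2 w)
  interpret subdiv_step G u1 u2 w by (rule subdiv_step_Theta[OF step.hyps])
  have "\<exists>r\<in>Gamma G. r \<notin> {u1, u2}"
  proof (cases "card (verts G) = 3")
    case True
    moreover have "card {u1, u2} = 2"
      using distinct by simp
    ultimately have "verts G \<noteq> {u1, u2}"
      by auto
    then obtain r where "r \<in> verts G" "r \<notin> {u1, u2}"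
      using ends_in_verts by blast
    then show ?thesis
      using Gamma_Theta_card_3[OF step.hyps(1) True] by auto
  next
    case False
    then obtain x y where "x \<in> Gamma G" "y \<in> Gamma G" "x \<noteq> y" "y \<notin> nbrs G x"
      using step.IH step.prems card_verts_subdiv by auto
    moreover have "u2 \<in> nbrs G u1" "u1 \<in> nbrs G u2"
      using edge by (auto simp: nbrs_def insert_commute)
    ultimately have "x \<notin> {u1, u2} \<or> y \<notin> {u1, u2}"
      by auto
    with \<open>x \<in> Gamma G\<close> \<open>y \<in> Gamma G\<close> show ?thesis
      by blast
  qed
  then show ?case
    using nonadjacent_Gamma_pair_subdiv by blast
qed

theorem lemma4p5:
  assumes "G \<in> Theta"
  shows "(card (verts G) \<ge> 3 \<longrightarrow> Min (deg G ` verts G) = 4)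
       \<and> (card (verts G) \<ge> 4 \<longrightarrow>
            (\<exists>x\<in>Gamma G. \<exists>y\<in>Gamma G. x \<noteq> y \<and> y \<notin> nbrs G x))"
  using Min_deg_Theta[OF assms] nonadjacent_Gamma_pair_Theta[OF assms] by blast

end
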